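(* Let $n$ be a positive integer and let $\mathcal{B}$ be a balanced bipartite graph on $2n$ vertices with parts $V_1$ and $V_2$ such that $\delta(\mathcal{B})\geq\frac{n}{2}+1$. Let $S\subseteq V(\mathcal{B})$ with $|S|=n+1$ such that $\mathcal{B}[S]$ is a forest. If $\min\{|S\cap V_1|,|S\cap V_2|\}=2$, then $n$ is even.
   Context: All graphs are finite and simple. A balanced bipartite graph on $2n$ vertices is a bipartite graph with a given bipartition $(V_1,V_2)$ where $|V_1|=|V_2|=n$. $\delta(G)$ denotes the minimum degree of $G$, and $G[S]$ the subgraph induced by $S\subseteq V(G)$. *)

theory Defs
  imports Complex_Main
begin

definition simple_graph :: "'a set \<Rightarrow> ('a \<Rightarrow> 'a \<Rightarrow> bool) \<Rightarrow> bool" where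
  "simple_graph V E \<longleftrightarrow> finite V \<and> (\<forall>x y. E x y \<longrightarrow> E y x) \<and> (\<forall>x. \<not> E x x)
     \<and> (\<forall>x y. E x y \<longrightarrow> x \<in> V \<and> y \<in> V)"

definition balanced_bipartite :: "'a set \<Rightarrow> 'a set \<Rightarrow> ('a \<Rightarrow> 'a \<Rightarrow> bool) \<Rightarrow> nat \<Rightarrow> bool" where
  "balanced_bipartite V1 V2 E n \<longleftrightarrow> simple_graph (V1 \<union> V2) E \<and> V1 \<inter> V2 = {}
     \<and> card V1 = n \<and> card V2 = n
     \<and> (\<forall>x y. E x y \<longrightarrow> (x \<in> V1 \<and> y \<in> V2) \<or> (x \<in> V2 \<and> y \<in> V1))"

definition degree :: "'a set \<Rightarrow> ('a \<Rightarrow> 'a \<Rightarrow> bool) \<Rightarrow> 'a \<Rightarrow> nat" where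
  "degree V E v = card {u \<in> V. E v u}"

definition is_cycle :: "'a set \<Rightarrow> ('a \<Rightarrow> 'a \<Rightarrow> bool) \<Rightarrow> 'a list \<Rightarrow> bool" where
  "is_cycle V E cs \<longleftrightarrow> length cs \<ge> 3 \<and> distinct cs \<and> set cs \<subseteq> V
     \<and> (\<forall>i. Suc i < length cs \<longrightarrow> E (cs ! i) (cs ! Suc i))
     \<and> E (last cs) (hd cs)"

definition induced_forest :: "('a \<Rightarrow> 'a \<Rightarrow> bool) \<Rightarrow> 'a set \<Rightarrow> bool" where
  "induced_forest E S \<longleftrightarrow> (\<nexists>cs. is_cycle S E cs)"

end

theory Submission
  imports Defs
begin

text \<open>By symmetry say S meets V1 in {a, b}. Then T = S \<inter> V2 has n - 1 vertices,
  so a and b each have at most one neighbour in V2 outside T and hence at least n/2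
  neighbours in T. As the forest B[S] has no 4-cycle, a and b share at most one neighbour
  in T, so their neighbourhoods in T have total size at most |T| + 1 = n. Hence both have
  size exactly n/2.\<close>

lemma balanced_bipartite_swap:
  "balanced_bipartite X Y E n \<Longrightarrow> balanced_bipartite Y X E n"
  unfolding balanced_bipartite_def by (auto simp: Un_commute)

lemma induced_forest_common_neighbours_le_1:
  assumes graph: "simple_graph V E" and forest: "induced_forest E S"
    and "a \<in> S" "b \<in> S" "a \<noteq> b"
  shows "card {u \<in> S. E a u \<and> E b u} \<le> 1"
proof (rule ccontr)
  have "{u \<in> S. E a u \<and> E b u} \<subseteq> V"
    using graph unfolding simple_graph_def by blast
  then have "finite {u \<in> S. E a u \<and> E b u}"
    using graph finite_subset unfolding simple_graph_def by blast
  moreover assume "\<not> card {u \<in> S. E a u \<and> E b u} \<le> 1"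
  ultimately obtain x y where "x \<in> S" "y \<in> S" "x \<noteq> y"
    and edges: "E a x" "E b x" "E a y" "E b y"
    by (auto simp: card_le_Suc0_iff_eq)
  have "E x a" "E x b" "E y a" "E y b" "x \<noteq> a" "x \<noteq> b" "y \<noteq> a" "y \<noteq> b"
    using graph edges unfolding simple_graph_def by metis+
  then have "is_cycle S E [a, x, b, y]"
    using \<open>x \<in> S\<close> \<open>y \<in> S\<close> \<open>x \<noteq> y\<close> \<open>a \<in> S\<close> \<open>b \<in> S\<close> \<open>a \<noteq> b\<close> edges
    unfolding is_cycle_def by (auto simp: less_Suc_eq nth_Cons')
  then show False
    using forest unfolding induced_forest_def by blast
qed

lemma induced_forest_card_neighbours_le:
  assumes "simple_graph V E" "induced_forest E S" "a \<in> S" "b \<in> S" "a \<noteq> b"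
    and "T \<subseteq> S" "finite T"
  shows "card {u \<in> T. E a u} + card {u \<in> T. E b u} \<le> card T + 1"
proof -
  have "card ({u \<in> T. E a u} \<inter> {u \<in> T. E b u}) \<le> card {u \<in> S. E a u \<and> E b u}"
    using assms(1,6) unfolding simple_graph_def
    by (intro card_mono) (auto intro: finite_subset[of _ V])
  also have "\<dots> \<le> 1"
    using assms(1-5) by (rule induced_forest_common_neighbours_le_1)
  finally show ?thesis
    using card_Un_Int[of "{u \<in> T. E a u}" "{u \<in> T. E b u}"] \<open>finite T\<close>
      card_mono[OF \<open>finite T\<close>, of "{u \<in> T. E a u} \<union> {u \<in> T. E b u}"]
    by auto
qed

lemma degree_le_neighbours_in_plus_card_diff:
  assumes "balanced_bipartite X Y E n" "v \<in> X" "T \<subseteq> Y"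
  shows "degree (X \<union> Y) E v \<le> card {u \<in> T. E v u} + card (Y - T)"
proof -
  have fin: "finite Y"
    using assms(1) unfolding balanced_bipartite_def simple_graph_def by blast
  have "{u \<in> X \<union> Y. E v u} \<subseteq> {u \<in> T. E v u} \<union> (Y - T)"
    using assms unfolding balanced_bipartite_def by auto
  then have "degree (X \<union> Y) E v \<le> card ({u \<in> T. E v u} \<union> (Y - T))"
    unfolding degree_def using fin assms(3) by (intro card_mono) (auto intro: finite_subset)
  also have "\<dots> \<le> card {u \<in> T. E v u} + card (Y - T)"
    by (rule card_Un_le)
  finally show ?thesis .
qed

lemma even_if_forest_meets_part_in_two:
  assumes bip: "balanced_bipartite X Y E n"
    and deg: "\<forall>v \<in> X \<union> Y. real (degree (X \<union> Y) E v) \<ge> real n / 2 + 1"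
    and "S \<subseteq> X \<union> Y" "card S = n + 1" and forest: "induced_forest E S"
    and two: "card (S \<inter> X) = 2"
  shows "even n"
proof -
  define T where "T = S \<inter> Y"
  define N where "N v = {u \<in> T. E v u}" for v
  have finite: "finite X" "finite Y" and "X \<inter> Y = {}" "card Y = n"
    using bip unfolding balanced_bipartite_def simple_graph_def by auto
  have "S = (S \<inter> X) \<union> T" "(S \<inter> X) \<inter> T = {}"
    using \<open>S \<subseteq> X \<union> Y\<close> \<open>X \<inter> Y = {}\<close> unfolding T_def by auto
  then have "card S = 2 + card T"
    using two finite by (metis T_def card_Un_disjoint finite_Int)
  then have card_T: "card T + 1 = n"
    using \<open>card S = n + 1\<close> by simp
  have "T \<subseteq> Y" "finite T"
    using finite unfolding T_def by auto
  then have "card (Y - T) = 1"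
    using card_T \<open>card Y = n\<close> by (simp add: card_Diff_subset)
  then have large: "real n / 2 \<le> real (card (N v))" if "v \<in> X" for v
    using deg that degree_le_neighbours_in_plus_card_diff[OF bip that \<open>T \<subseteq> Y\<close>]
    unfolding N_def by force
  obtain a b where ab: "S \<inter> X = {a, b}" "a \<noteq> b"
    using two card_2_iff by metis
  then have "card (N a) + card (N b) \<le> card T + 1"
    using bip forest \<open>finite T\<close> unfolding N_def T_def balanced_bipartite_def
    by (intro induced_forest_card_neighbours_le[of "X \<union> Y"]) auto
  moreover have "real n / 2 \<le> real (card (N a))" "real n / 2 \<le> real (card (N b))"
    using ab(1) large by auto
  ultimately have "n = 2 * card (N a)"
    using card_T by linarith
  then show ?thesis
    by simp
qed

theorem theorem2p4:
  fixes V1 V2 :: "'a set" and E :: "'a \<Rightarrow> 'a \<Rightarrow> bool" and n :: nat and S :: "'a set"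
  assumes "n > 0"
    and "balanced_bipartite V1 V2 E n"
    and "\<forall>v \<in> V1 \<union> V2. real (degree (V1 \<union> V2) E v) \<ge> real n / 2 + 1"
    and "S \<subseteq> V1 \<union> V2" and "card S = n + 1"
    and "induced_forest E S"
    and "min (card (S \<inter> V1)) (card (S \<inter> V2)) = 2"
  shows "even n"
proof (cases "card (S \<inter> V1) = 2")
  case True
  then show ?thesis
    using assms(2-6) by (rule even_if_forest_meets_part_in_two[rotated -1])
next
  case False
  then have "card (S \<inter> V2) = 2"
    using assms(7) by (simp add: min_def split: if_splits)
  then show ?thesis
    using balanced_bipartite_swap[OF assms(2)] assms(3-6)
    by (intro even_if_forest_meets_part_in_two[of V2 V1 E n S]) (auto simp: Un_commute)
qed

end
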